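(* Let $k\in[0,1]$ and $n_k=\lfloor k\Lambda(\tau)\rfloor$. Under batch processing, the inspector selects at time $\tau$ the $n_k$ transactions with the largest scores among all $N(\tau)$ arrivals. Let $N_0(\tau)$, $N_1(\tau)$ be the numbers of non-fraudulent and fraudulent arrivals, let $S^{(0)}_{(1)}\le\dots\le S^{(0)}_{(N_0(\tau))}$ and $S^{(1)}_{(1)}\le\dots\le S^{(1)}_{(N_1(\tau))}$ be the order statistics of their scores, and set $\rho_0(j)=N_0(\tau)-n_k+j$, $\rho_1(j)=N_1(\tau)-j+1$. For $j=1,\dots,\min\{n_k,N_1(\tau)\}$ define $$F_{W_j}(w)=\int_0^1\int_0^{w+s_1} f_{S^{(0)}_{(\rho_0(j))}}(s_0)\,f_{S^{(1)}_{(\rho_1(j))}}(s_1)\,ds_0\,ds_1,$$ the CDF of $W_j=S^{(0)}_{(\rho_0(j))}-S^{(1)}_{(\rho_1(j))}$, where the order-statistic densities are, for an i.i.d. sample of size $n$ with CDF $F$ and density $f$, $f_{(i)}(x)=i\binom{n}{i}F(x)^{i-1}(1-F(x))^{n-i}f(x)$ (with $(F,f,n)=(F_0,f_0,N_0(\tau))$ for $S^{(0)}$ and $(F_1,f_1,N_1(\tau))$ for $S^{(1)}$). Then the fraud detection rate $\Psi_{BP}(k)$ of batch processing satisfies $$\Psi_{BP}(k)\ \ge\ \frac{1}{\beta\Lambda(\tau)}\,\mathbb{E}_{N_0,N_1}\Big[\sum_{j=1}^{\min\{n_k,N_1(\tau)\}}F_{W_j}(0)\Big].$$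
   Context: Setting: transactions arrive on $[0,\tau]$ according to an NHPP $N(t)$ with continuous intensity $\lambda(t)$, $\Lambda(t)=\int_0^t\lambda(u)du$. Each transaction has label $Y\in\{0,1\}$ with $P(Y=1)=\beta\ll1/2$ and classifier score $S\in[0,1]$; transactions are independent, and scores/labels are independent of arrival times. By thinning, fraudulent and non-fraudulent arrivals form independent NHPPs $N_1(t)$, $N_0(t)$ with intensities $\beta\lambda(t)$, $(1-\beta)\lambda(t)$. $F_0,f_0$ (resp. $F_1,f_1$) are the CDF and density of the score of a non-fraudulent (resp. fraudulent) transaction. With capacity $k$, at most $n_k=\lfloor k\Lambda(\tau)\rfloor$ transactions are inspected. The fraud detection rate $\Psi(k)$ is the expected fraction of all fraudulent transactions arriving in $[0,\tau]$ that are inspected, $\Psi(k)=\mathbb{E}\big[\sum_{i\in\mathcal{I}(k)}Y_i/\sum_{i=1}^{N(\tau)}Y_i\big]$ (ratio taken as $1$ if no fraud arrives). *)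

theory Defs
  imports "HOL-Probability.Probability"
begin

text \<open>Rank (1 = highest) of fraudulent transaction i in the batch consisting of
  a non-fraudulent scores s0 0..a-1 and b fraudulent scores s1 0..b-1.
  Items are totally ordered by score; ties (a null event) are broken in favour of
  non-fraudulent items, and among fraudulent items by index.\<close>
definition fraud_rank :: "nat \<Rightarrow> nat \<Rightarrow> (nat \<Rightarrow> real) \<Rightarrow> (nat \<Rightarrow> real) \<Rightarrow> nat \<Rightarrow> nat" where
  "fraud_rank a b s0 s1 i =
     1 + card {j \<in> {..<a}. s1 i \<le> s0 j}
       + card {l \<in> {..<b}. s1 i < s1 l \<or> (s1 l = s1 i \<and> l < i)}"

definition bp_detected :: "nat \<Rightarrow> nat \<Rightarrow> nat \<Rightarrow> (nat \<Rightarrow> real) \<Rightarrow> (nat \<Rightarrow> real) \<Rightarrow> nat" where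
  "bp_detected n a b s0 s1 = card {i \<in> {..<b}. fraud_rank a b s0 s1 i \<le> n}"

definition bp_ratio :: "nat \<Rightarrow> nat \<Rightarrow> nat \<Rightarrow> (nat \<Rightarrow> real) \<Rightarrow> (nat \<Rightarrow> real) \<Rightarrow> real" where
  "bp_ratio n a b s0 s1 = (if b = 0 then 1 else real (bp_detected n a b s0 s1) / real b)"

text \<open>Law of the score vectors given N0(tau) = a, N1(tau) = b: independent i.i.d. scores
  with densities f0 (non-fraudulent) and f1 (fraudulent).\<close>
definition score_space :: "(real \<Rightarrow> real) \<Rightarrow> (real \<Rightarrow> real) \<Rightarrow> nat \<Rightarrow> nat \<Rightarrow> ((nat \<Rightarrow> real) \<times> (nat \<Rightarrow> real)) measure" where
  "score_space f0 f1 a b =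
     (PiM {..<a} (\<lambda>_. density lborel (\<lambda>x. ennreal (f0 x)))) \<Otimes>\<^sub>M
     (PiM {..<b} (\<lambda>_. density lborel (\<lambda>x. ennreal (f1 x))))"

definition Psi_BP :: "(real \<Rightarrow> real) \<Rightarrow> (real \<Rightarrow> real) \<Rightarrow> real \<Rightarrow> real \<Rightarrow> nat \<Rightarrow> real" where
  "Psi_BP f0 f1 \<beta> Lam n =
     measure_pmf.expectation (pair_pmf (poisson_pmf ((1 - \<beta>) * Lam)) (poisson_pmf (\<beta> * Lam)))
       (\<lambda>(a, b). integral\<^sup>L (score_space f0 f1 a b) (\<lambda>(s0, s1). bp_ratio n a b s0 s1))"

text \<open>The index is an integer;
  for i \<le> 0 the binomial coefficient (m choose i) is 0, so the density is 0.\<close>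
definition os_density :: "(real \<Rightarrow> real) \<Rightarrow> (real \<Rightarrow> real) \<Rightarrow> nat \<Rightarrow> int \<Rightarrow> real \<Rightarrow> real" where
  "os_density F f m i x =
     (if 1 \<le> i then real_of_int i * real (m choose nat i) * F x ^ (nat i - 1)
                    * (1 - F x) ^ (m - nat i) * f x
      else 0)"

definition F_W :: "(real \<Rightarrow> real) \<Rightarrow> (real \<Rightarrow> real) \<Rightarrow> (real \<Rightarrow> real) \<Rightarrow> (real \<Rightarrow> real)
                   \<Rightarrow> nat \<Rightarrow> nat \<Rightarrow> nat \<Rightarrow> nat \<Rightarrow> real \<Rightarrow> real" where
  "F_W F0 f0 F1 f1 n a b j w =
     (let rho0 = int a - int n + int j; rho1 = int b - int j + 1 in
      set_lebesgue_integral lborel {0..1} (\<lambda>s1.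
        set_lebesgue_integral lborel {0..w + s1} (\<lambda>s0.
          os_density F0 f0 a rho0 s0 * os_density F1 f1 b rho1 s1)))"

end

theory Submission
  imports Defs
begin

(* A fraud with score y is detected when its rank is at most n, and its rank is at most
   1 + X + Y, where X and Y count the non-frauds and the other frauds scoring at least y.
   Given y these counts are independent binomials, so with N0 = a and N1 = b the expected number
   of detected frauds is at least b times the integral of f1 * detection_prob.  On the other side,
   the substitution u = F0(s0) turns each F_W_j(0) into the integral of f1 against a binomial
   tail, and summed over j these integrands stay below b * f1 * detection_prob.  Finally,
   deleting one of b + 1 frauds lowers no other fraud's rank, so the expected detected fraction
   h(b) is nonincreasing in b; with the size-biasing identity E[N g(N)] = mu E[g(N + 1)] for
   N ~ Poisson(mu) this gives
   E[sum_j F_W_j(0)] <= E[N1 h(N1)] = beta Lambda E[h(N1 + 1)] <= beta Lambda Psi_BP. *)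

section \<open>Laws with a density on [0, 1]\<close>

locale unit_density =
  fixes f F :: "real \<Rightarrow> real"
  assumes f_measurable: "f \<in> borel_measurable borel"
    and f_nonneg: "\<And>x. 0 \<le> f x"
    and f_outside: "\<And>x. x \<notin> {0..1} \<Longrightarrow> f x = 0"
    and f_integrable: "integrable lborel f"
    and f_integral: "integral\<^sup>L lborel f = 1"
    and F_def: "\<And>x. F x = set_lebesgue_integral lborel {..x} f"
begin

definition M :: "real measure" where
  "M = density lborel (\<lambda>x. ennreal (f x))"

lemma f_borel_measurable [measurable]: "f \<in> borel_measurable lborel"
  using f_measurable by simp

lemma sets_M [simp, measurable_cong]: "sets M = sets borel"
  by (simp add: M_def)

lemma space_M [simp]: "space M = UNIV"
  by (simp add: M_def)

lemma emeasure_M: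
  assumes "A \<in> sets borel"
  shows "emeasure M A = ennreal (LINT x|lborel. indicator A x * f x)"
proof -
  have "emeasure M A = (\<integral>\<^sup>+x. ennreal (indicator A x * f x) \<partial>lborel)"
    unfolding M_def using assms
    by (simp add: emeasure_density) (intro nn_integral_cong, simp add: indicator_def)
  also have "\<dots> = ennreal (LINT x|lborel. indicator A x * f x)"
    using assms f_integrable f_nonneg
    by (intro nn_integral_eq_integral)
       (auto intro!: integrable_real_mult_indicator simp: mult.commute)
  finally show ?thesis .
qed

sublocale prob_space M
proof
  show "emeasure M (space M) = 1"
    using emeasure_M[of UNIV] f_integral by simp
qed

sublocale real_distribution M
  by unfold_locales simp

lemma F_eq_cdf: "F x = cdf M x"
proof -
  have "emeasure M {..x} = ennreal (F x)"
    by (simp add: emeasure_M F_def set_lebesgue_integral_def)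
  then show ?thesis
    using F_def f_nonneg
    by (simp add: cdf_def measure_def set_lebesgue_integral_def integral_nonneg_AE)
qed

lemma measure_atMost: "measure M {..x} = F x"
  by (simp add: F_eq_cdf cdf_def)

lemma measure_singleton: "measure M {x} = 0"
proof -
  have "emeasure M {x} = (\<integral>\<^sup>+t. ennreal (f t) * indicator {x} t \<partial>lborel)"
    unfolding M_def by (simp add: emeasure_density)
  also have "\<dots> = 0"
    by (rule nn_integral_null_set) (simp add: finite_imp_null_set_lborel)
  finally show ?thesis by (simp add: measure_def)
qed

lemma isCont_F: "isCont F x"
proof -
  have "F = cdf M"
    using F_eq_cdf by auto
  then show ?thesis
    using isCont_cdf measure_singleton by simp
qed

lemma continuous_on_F: "continuous_on S F"
  using isCont_F by (simp add: continuous_at_imp_continuous_on)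

lemma F_borel_measurable [measurable]: "F \<in> borel_measurable borel"
  by (intro borel_measurable_continuous_onI continuous_on_F)

lemma F_mono: "x \<le> y \<Longrightarrow> F x \<le> F y"
  using cdf_nondecreasing by (simp add: F_eq_cdf)

lemma F_nonneg: "0 \<le> F x"
  using cdf_nonneg by (simp add: F_eq_cdf)

lemma F_le_1: "F x \<le> 1"
  using cdf_bounded_prob by (simp add: F_eq_cdf)

lemma F_eq_0: "x < 0 \<Longrightarrow> F x = 0"
proof -
  assume "x < 0"
  then have "(\<lambda>t. indicator {..x} t * f t) = (\<lambda>t. 0::real)"
    using f_outside by (auto simp: indicator_def)
  then show "F x = 0"
    by (simp add: F_def set_lebesgue_integral_def)
qed

lemma measure_atLeast: "measure M {x..} = 1 - F x"
proof -
  have "{x..} = {x<..} \<union> {x}"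
    by auto
  then have "measure M {x..} = measure M {x<..} + measure M {x}"
    using finite_measure_Union[of "{x<..}" "{x}"] by simp
  moreover have "measure M {x<..} = 1 - F x"
    using prob_compl[of "{..x}"] F_eq_cdf by (simp add: cdf_def Compl_eq_Diff_UNIV[symmetric])
  ultimately show ?thesis
    using measure_singleton by simp
qed

lemma sublevel_set_F:
  assumes "0 \<le> y" "y < F s"
  obtains c where "{t. F t \<le> y} \<inter> {..s} = {..c}" "F c = y"
proof -
  have "0 \<le> s"
    using assms F_eq_0[of s] by (cases "s < 0") auto
  let ?C = "{-1..s} \<inter> F -` {y}"
  have "\<exists>x\<ge>-1. x \<le> s \<and> F x = y"
    using assms \<open>0 \<le> s\<close> F_eq_0[of "-1"] by (intro IVT') (auto intro: continuous_on_F)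
  then have "?C \<noteq> {}"
    by auto
  have "closed ?C"
    by (intro continuous_closed_preimage continuous_on_F) auto
  then have "compact ?C"
    unfolding compact_eq_bounded_closed by (auto intro: bounded_subset[of "{-1..s}"])
  then obtain c where c: "c \<in> ?C" "\<And>t. t \<in> ?C \<Longrightarrow> t \<le> c"
    using compact_attains_sup[OF _ \<open>?C \<noteq> {}\<close>] by blast
  have "{t. F t \<le> y} \<inter> {..s} = {..c}"
  proof (intro equalityI subsetI)
    fix t assume "t \<in> {..c}"
    then show "t \<in> {t. F t \<le> y} \<inter> {..s}"
      using c(1) F_mono[of t c] by auto
  next
    fix t assume t: "t \<in> {t. F t \<le> y} \<inter> {..s}"
    show "t \<in> {..c}"
    proof (rule ccontr)
      assume "t \<notin> {..c}"
      then have "t \<in> ?C"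
        using t c(1) F_mono[of c t] by auto
      then show False
        using c(2)[of t] \<open>t \<notin> {..c}\<close> by auto
    qed
  qed
  then show ?thesis
    using c(1) that by blast
qed

lemma measure_atMost_Int_vimage_F:
  "measure M ({..s} \<inter> F -` {..y}) = measure lborel ({0..F s} \<inter> {..y})"
proof -
  consider "y < 0" | "F s \<le> y" | "0 \<le> y" "y < F s"
    by linarith
  then show ?thesis
  proof cases
    case 1
    then have "{..s} \<inter> F -` {..y} = {}" "{0..F s} \<inter> {..y} = {}"
      by (auto dest: order.trans[OF F_nonneg])
    then show ?thesis
      by simp
  next
    case 2
    then have "{..s} \<inter> F -` {..y} = {..s}"
      using F_mono by force
    moreover have "{0..F s} \<inter> {..y} = {0..F s}"
      using 2 by auto
    ultimately show ?thesis
      using F_nonneg[of s] by (simp add: measure_atMost)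
  next
    case 3
    then obtain c where c: "{t. F t \<le> y} \<inter> {..s} = {..c}" "F c = y"
      by (rule sublevel_set_F)
    then have "{..s} \<inter> F -` {..y} = {..c}"
      by auto
    moreover have "{0..F s} \<inter> {..y} = {0..y}"
      using 3 by auto
    ultimately show ?thesis
      using 3 c(2) by (simp add: measure_atMost)
  qed
qed

lemma distr_F_restricted:
  "distr (density M (indicator {..s})) borel F = density lborel (indicator {0..F s})"
  (is "distr ?N borel F = ?U")
proof (rule cdf_unique')
  interpret N: finite_measure ?N
    by (rule finite_measureI) (simp add: emeasure_restricted emeasure_eq_measure)
  show "finite_borel_measure (distr ?N borel F)"
    by (auto simp: finite_borel_measure_def finite_borel_measure_axioms_def
        intro!: N.finite_measure_distr)
  have "emeasure ?U UNIV = emeasure lborel {0..F s}"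
    by (simp add: emeasure_restricted)
  then show "finite_borel_measure ?U"
    using F_nonneg[of s]
    by (auto simp: finite_borel_measure_def finite_borel_measure_axioms_def emeasure_lborel_Icc_eq
        intro!: finite_measureI)
  show "cdf (distr ?N borel F) = cdf ?U"
  proof
    fix y
    have "F -` {..y} \<in> sets M"
      using measurable_sets[OF F_borel_measurable, of "{..y}"] by simp
    then have "cdf (distr ?N borel F) y = measure M ({..s} \<inter> F -` {..y})"
      by (simp add: cdf_def measure_distr) (simp add: measure_def emeasure_restricted)
    also have "\<dots> = measure lborel ({0..F s} \<inter> {..y})"
      by (rule measure_atMost_Int_vimage_F)
    also have "\<dots> = cdf ?U y"
      by (simp add: cdf_def measure_def emeasure_restricted)
    finally show "cdf (distr ?N borel F) y = cdf ?U y" .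
  qed
qed

lemma nn_integral_comp_F:
  assumes [measurable]: "g \<in> borel_measurable borel"
  shows "(\<integral>\<^sup>+t. ennreal (g (F t) * f t) * indicator {..s} t \<partial>lborel)
       = (\<integral>\<^sup>+u. ennreal (g u) * indicator {0..F s} u \<partial>lborel)"
proof -
  have "(\<integral>\<^sup>+u. ennreal (g u) * indicator {0..F s} u \<partial>lborel)
      = (\<integral>\<^sup>+u. ennreal (g u) \<partial>density lborel (indicator {0..F s}))"
    by (simp add: nn_integral_density mult.commute)
  also have "\<dots> = (\<integral>\<^sup>+t. ennreal (g (F t)) \<partial>density M (indicator {..s}))"
    by (subst distr_F_restricted[symmetric], subst nn_integral_distr) auto
  also have "\<dots> = (\<integral>\<^sup>+t. indicator {..s} t * ennreal (g (F t)) \<partial>M)"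
    by (subst nn_integral_density) auto
  also have "\<dots> = (\<integral>\<^sup>+t. ennreal (f t) * (indicator {..s} t * ennreal (g (F t))) \<partial>lborel)"
    unfolding M_def by (subst nn_integral_density) auto
  also have "\<dots> = (\<integral>\<^sup>+t. ennreal (g (F t) * f t) * indicator {..s} t \<partial>lborel)"
  proof (intro nn_integral_cong)
    fix t
    show "ennreal (f t) * (indicator {..s} t * ennreal (g (F t))) = ennreal (g (F t) * f t) * indicator {..s} t"
      using f_nonneg[of t]
      by (cases "0 \<le> g (F t)") (auto simp: indicator_def ennreal_mult' ennreal_neg mult.commute)
  qed
  finally show ?thesis ..
qed

end

section \<open>Order-statistic and binomial polynomials\<close>

definition unif_os_density :: "nat \<Rightarrow> nat \<Rightarrow> real \<Rightarrow> real" where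
  "unif_os_density m l y = real l * real (m choose l) * y ^ (l - 1) * (1 - y) ^ (m - l)"

definition binomial_tail :: "nat \<Rightarrow> nat \<Rightarrow> real \<Rightarrow> real" where
  "binomial_tail m i y = (\<Sum>l=i..m. real (m choose l) * y ^ l * (1 - y) ^ (m - l))"

definition binomial_weight :: "nat \<Rightarrow> real \<Rightarrow> nat \<Rightarrow> real" where
  "binomial_weight k p c = real (k choose c) * p ^ c * (1 - p) ^ (k - c)"

lemma unif_os_density_nonneg: "0 \<le> y \<Longrightarrow> y \<le> 1 \<Longrightarrow> 0 \<le> unif_os_density m l y"
  by (simp add: unif_os_density_def)

lemma binomial_tail_nonneg: "0 \<le> y \<Longrightarrow> y \<le> 1 \<Longrightarrow> 0 \<le> binomial_tail m i y"
  unfolding binomial_tail_def by (intro sum_nonneg) auto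

lemma binomial_weight_nonneg: "0 \<le> p \<Longrightarrow> p \<le> 1 \<Longrightarrow> 0 \<le> binomial_weight k p c"
  by (simp add: binomial_weight_def)

lemma continuous_on_unif_os_density: "continuous_on S (unif_os_density m l)"
  unfolding unif_os_density_def[abs_def] by (intro continuous_intros)

lemma unif_os_density_borel_measurable [measurable]: "unif_os_density m l \<in> borel_measurable borel"
  by (intro borel_measurable_continuous_onI continuous_on_unif_os_density)

lemma binomial_tail_borel_measurable [measurable]: "binomial_tail m i \<in> borel_measurable borel"
  unfolding binomial_tail_def[abs_def] by measurable

lemma borel_measurable_binomial_weight [measurable]:
  assumes [measurable]: "p \<in> borel_measurable M"
  shows "(\<lambda>x. binomial_weight k (p x) c) \<in> borel_measurable M"
  unfolding binomial_weight_def by measurable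

lemma binomial_term_has_real_derivative:
  "((\<lambda>y. real (m choose l) * y ^ l * (1 - y) ^ (m - l)) has_real_derivative
     unif_os_density m l y - unif_os_density m (Suc l) y) (at y within S)"
proof -
  have choose: "real (m - l) * real (m choose l) = real (Suc l) * real (m choose Suc l)"
    by (metis binomial_absorb_comp binomial_absorption of_nat_mult)
  have "real (m choose l) * (y ^ l * (real (m - l) * (1 - y) ^ (m - l - 1)))
      = (real (m - l) * real (m choose l)) * y ^ l * (1 - y) ^ (m - Suc l)"
    by (simp add: algebra_simps)
  also have "\<dots> = unif_os_density m (Suc l) y"
    by (simp add: choose unif_os_density_def)
  finally have "real (m choose l) * (real l * y ^ (l - 1) * (1 - y) ^ (m - l)
      + y ^ l * (real (m - l) * (1 - y) ^ (m - l - 1) * (-1)))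
      = unif_os_density m l y - unif_os_density m (Suc l) y"
    by (simp add: unif_os_density_def algebra_simps)
  moreover have "((\<lambda>y. real (m choose l) * y ^ l * (1 - y) ^ (m - l)) has_real_derivative
      real (m choose l) * (real l * y ^ (l - 1) * (1 - y) ^ (m - l)
        + y ^ l * (real (m - l) * (1 - y) ^ (m - l - 1) * (-1)))) (at y within S)"
    by (auto intro!: derivative_eq_intros simp: algebra_simps)
  ultimately show ?thesis
    by simp
qed

text \<open>The derivative of the sum telescopes.\<close>

lemma binomial_tail_has_real_derivative:
  assumes "1 \<le> i"
  shows "(binomial_tail m i has_real_derivative unif_os_density m i y) (at y within S)"
proof (cases "i \<le> Suc m")
  case True
  have "((\<lambda>y. \<Sum>l=i..m. real (m choose l) * y ^ l * (1 - y) ^ (m - l)) has_real_derivative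
      (\<Sum>l=i..m. unif_os_density m l y - unif_os_density m (Suc l) y)) (at y within S)"
    by (intro DERIV_sum binomial_term_has_real_derivative)
  moreover have "(\<Sum>l=i..m. unif_os_density m l y - unif_os_density m (Suc l) y)
      = unif_os_density m i y"
    using sum_Suc_diff[OF True, of "\<lambda>l. - unif_os_density m l y"]
    by (simp add: unif_os_density_def)
  ultimately show ?thesis
    unfolding binomial_tail_def[abs_def] by simp
next
  case False
  then have "binomial_tail m i = (\<lambda>_. 0)" "unif_os_density m i y = 0"
    by (auto simp: binomial_tail_def[abs_def] unif_os_density_def)
  then show ?thesis
    by simp
qed

lemma nn_integral_unif_os_density:
  assumes "1 \<le> i" "0 \<le> y" "y \<le> 1"
  shows "(\<integral>\<^sup>+u. ennreal (unif_os_density m i u) * indicator {0..y} u \<partial>lborel)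
       = ennreal (binomial_tail m i y)"
proof -
  have "(\<integral>\<^sup>+u. ennreal (unif_os_density m i u) * indicator {0..y} u \<partial>lborel)
      = (\<integral>\<^sup>+u. ennreal (indicator {0..y} u *\<^sub>R unif_os_density m i u) \<partial>lborel)"
    by (intro nn_integral_cong) (auto simp: indicator_def)
  also have "\<dots> = ennreal (LBINT u. indicator {0..y} u *\<^sub>R unif_os_density m i u)"
    using assms borel_integrable_atLeastAtMost'[OF continuous_on_unif_os_density]
    by (intro nn_integral_eq_integral)
       (auto simp: set_integrable_def indicator_def intro!: unif_os_density_nonneg)
  also have "(LBINT u. indicator {0..y} u *\<^sub>R unif_os_density m i u)
      = binomial_tail m i y - binomial_tail m i 0"
    using assms
    by (intro integral_FTC_atLeastAtMost continuous_on_unif_os_density)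
       (auto simp: has_real_derivative_iff_has_vector_derivative[symmetric]
         intro: binomial_tail_has_real_derivative)
  finally show ?thesis
    using assms by (simp add: binomial_tail_def)
qed

lemma sum_binomial_weight_Suc:
  "(\<Sum>c\<le>k. binomial_weight k p c * (p * g (Suc c) + (1 - p) * g c))
     = (\<Sum>c\<le>Suc k. binomial_weight (Suc k) p c * g c)"
proof -
  define A where "A = (\<Sum>c\<le>k. real (k choose c) * p ^ Suc c * (1 - p) ^ (k - c) * g (Suc c))"
  define B where "B = (\<Sum>c\<le>k. real (k choose Suc c) * p ^ Suc c * (1 - p) ^ (k - c) * g (Suc c))"
  have "(\<Sum>c\<le>k. binomial_weight k p c * (p * g (Suc c) + (1 - p) * g c))
      = A + (\<Sum>c\<le>k. real (k choose c) * p ^ c * (1 - p) ^ (Suc k - c) * g c)"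
    unfolding A_def sum.distrib[symmetric] binomial_weight_def
    by (intro sum.cong) (auto simp: Suc_diff_le algebra_simps)
  also have "(\<Sum>c\<le>k. real (k choose c) * p ^ c * (1 - p) ^ (Suc k - c) * g c)
      = (\<Sum>c\<le>Suc k. real (k choose c) * p ^ c * (1 - p) ^ (Suc k - c) * g c)"
    by simp
  also have "(\<Sum>c\<le>Suc k. real (k choose c) * p ^ c * (1 - p) ^ (Suc k - c) * g c)
      = (1 - p) ^ Suc k * g 0 + B"
    unfolding B_def by (subst sum.atMost_Suc_shift) simp
  finally have "(\<Sum>c\<le>k. binomial_weight k p c * (p * g (Suc c) + (1 - p) * g c))
      = (1 - p) ^ Suc k * g 0 + (A + B)"
    by simp
  moreover have "A + B
      = (\<Sum>c\<le>k. real (Suc k choose Suc c) * p ^ Suc c * (1 - p) ^ (k - c) * g (Suc c))"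
    unfolding A_def B_def sum.distrib[symmetric] by (intro sum.cong) (simp_all add: algebra_simps)
  moreover have "(\<Sum>c\<le>Suc k. binomial_weight (Suc k) p c * g c)
      = (1 - p) ^ Suc k * g 0
        + (\<Sum>c\<le>k. real (Suc k choose Suc c) * p ^ Suc c * (1 - p) ^ (k - c) * g (Suc c))"
    unfolding binomial_weight_def by (subst sum.atMost_Suc_shift) simp
  ultimately show ?thesis
    by simp
qed

lemma unif_os_density_eq_binomial_weight:
  assumes "1 \<le> j" "j \<le> b"
  shows "unif_os_density b (b - j + 1) v = real b * binomial_weight (b - 1) (1 - v) (j - 1)"
proof -
  have "real (Suc (b - j)) * real (b choose Suc (b - j)) = real b * real ((b - 1) choose (b - j))"
    by (metis binomial_absorption of_nat_mult)
  also have "(b - 1) choose (b - j) = (b - 1) choose (j - 1)"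
    using assms binomial_symmetric[of "j - 1" "b - 1"] by (simp add: diff_diff_eq)
  finally show ?thesis
    using assms by (simp add: unif_os_density_def binomial_weight_def Suc_diff_le algebra_simps)
qed

lemma binomial_tail_eq_sum_binomial_weight:
  "binomial_tail m i u = (\<Sum>c\<le>m. binomial_weight m (1 - u) c * (if c + i \<le> m then 1 else 0))"
proof -
  have "(\<Sum>c\<le>m. binomial_weight m (1 - u) c * (if c + i \<le> m then 1 else 0))
      = (\<Sum>c\<in>{c\<in>{..m}. c + i \<le> m}. binomial_weight m (1 - u) c)"
    by (simp add: sum.inter_filter[symmetric] if_distrib cong: if_cong)
  also have "\<dots> = binomial_tail m i u"
    unfolding binomial_tail_def
  proof (rule sum.reindex_bij_witness[where i="\<lambda>l. m - l" and j="\<lambda>c. m - c"])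
    fix c assume c: "c \<in> {c\<in>{..m}. c + i \<le> m}"
    then show "m - (m - c) = c" "m - c \<in> {i..m}"
      by auto
    show "real (m choose (m - c)) * u ^ (m - c) * (1 - u) ^ (m - (m - c)) = binomial_weight m (1 - u) c"
      using c binomial_symmetric[of c m] by (auto simp: binomial_weight_def algebra_simps)
  qed auto
  finally show ?thesis ..
qed

section \<open>Ranks and binomial counts\<close>

lemma measurable_card_filter:
  fixes J :: "nat set"
  assumes "\<And>j. j \<in> J \<Longrightarrow> Measurable.pred N (P j)"
  shows "(\<lambda>x. card {j\<in>J. P j x}) \<in> measurable N (count_space UNIV)"
proof (rule measurable_card)
  fix i
  show "{x\<in>space N. i \<in> {j\<in>J. P j x}} \<in> sets N"
    using assms[of i] by (cases "i \<in> J") (auto simp: pred_def)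
qed

lemma nn_integral_count_step:
  fixes g :: "nat \<Rightarrow> real"
  assumes "prob_space M" "S \<in> sets M" "\<And>c. 0 \<le> g c"
  shows "(\<integral>\<^sup>+y. ennreal (g (c + (if y \<in> S then 1 else 0))) \<partial>M)
       = ennreal (measure M S * g (Suc c) + (1 - measure M S) * g c)"
proof -
  interpret prob_space M by (rule assms(1))
  have "(\<integral>\<^sup>+y. ennreal (g (c + (if y \<in> S then 1 else 0))) \<partial>M)
      = (\<integral>\<^sup>+y. ennreal (g (Suc c)) * indicator S y + ennreal (g c) * indicator (space M - S) y \<partial>M)"
    by (intro nn_integral_cong) (auto simp: indicator_def)
  also have "\<dots> = ennreal (g (Suc c)) * ennreal (measure M S) + ennreal (g c) * ennreal (1 - measure M S)"
    using assms(2) by (simp add: nn_integral_add nn_integral_cmult_indicator emeasure_eq_measure prob_compl)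
  also have "\<dots> = ennreal (measure M S * g (Suc c) + (1 - measure M S) * g c)"
    using assms(3)[of c] assms(3)[of "Suc c"]
    by (simp add: ennreal_mult'[symmetric] ennreal_plus[symmetric] mult.commute del: ennreal_plus)
  finally show ?thesis .
qed

lemma nn_integral_PiM_card_binomial:
  fixes g :: "nat \<Rightarrow> real" and I :: "nat set"
  assumes M: "prob_space M" and S: "S \<in> sets M" and I: "finite I" and g: "\<And>c. 0 \<le> g c"
  shows "(\<integral>\<^sup>+\<omega>. ennreal (g (card {i\<in>I. \<omega> i \<in> S})) \<partial>PiM I (\<lambda>_. M))
       = ennreal (\<Sum>c\<le>card I. binomial_weight (card I) (measure M S) c * g c)"
  using I g
proof (induction I arbitrary: g rule: finite_induct)
  case empty
  interpret prob_space "PiM {} (\<lambda>_. M)"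
    by (intro prob_space_PiM M)
  show ?case
    by (simp add: binomial_weight_def emeasure_space_1)
next
  case (insert x I)
  interpret M: prob_space M by (rule M)
  interpret product_prob_space "\<lambda>_. M" by unfold_locales
  let ?p = "measure M S"
  define h where "h c = ?p * g (Suc c) + (1 - ?p) * g c" for c
  have "0 \<le> h c" for c
    using insert.prems by (auto simp: h_def)
  have card_upd: "card {i\<in>insert x I. fun_upd \<omega> x y i \<in> S} = card {i\<in>I. \<omega> i \<in> S} + (if y \<in> S then 1 else 0)"
    for \<omega> y
  proof -
    have "{i\<in>insert x I. fun_upd \<omega> x y i \<in> S}
        = (if y \<in> S then insert x {i\<in>I. \<omega> i \<in> S} else {i\<in>I. \<omega> i \<in> S})"
      using insert.hyps by auto
    then show ?thesis
      using insert.hyps by auto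
  qed
  have integral_last: "(\<integral>\<^sup>+y. ennreal (g (c + (if y \<in> S then 1 else 0))) \<partial>M) = ennreal (h c)" for c
    unfolding h_def using M S insert.prems by (rule nn_integral_count_step)
  have card_measurable: "(\<lambda>\<omega>. card {i\<in>insert x I. \<omega> i \<in> S}) \<in> measurable (PiM (insert x I) (\<lambda>_. M)) (count_space UNIV)"
    using S by (intro measurable_card_filter[where P="\<lambda>i \<omega>. \<omega> i \<in> S"]) auto
  have "(\<integral>\<^sup>+\<omega>. ennreal (g (card {i\<in>insert x I. \<omega> i \<in> S})) \<partial>PiM (insert x I) (\<lambda>_. M))
      = (\<integral>\<^sup>+\<omega>. (\<integral>\<^sup>+y. ennreal (g (card {i\<in>insert x I. fun_upd \<omega> x y i \<in> S})) \<partial>M) \<partial>PiM I (\<lambda>_. M))"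
    using insert.hyps
    by (intro product_nn_integral_insert measurable_compose[OF card_measurable] measurable_count_space) auto
  also have "\<dots> = (\<integral>\<^sup>+\<omega>. ennreal (h (card {i\<in>I. \<omega> i \<in> S})) \<partial>PiM I (\<lambda>_. M))"
    by (simp only: card_upd integral_last)
  also have "\<dots> = ennreal (\<Sum>c\<le>card I. binomial_weight (card I) ?p c * h c)"
    using insert.IH \<open>\<And>c. 0 \<le> h c\<close> by simp
  also have "(\<Sum>c\<le>card I. binomial_weight (card I) ?p c * h c)
      = (\<Sum>c\<le>card (insert x I). binomial_weight (card (insert x I)) ?p c * g c)"
    using insert.hyps sum_binomial_weight_Suc[of "card I" ?p g] by (simp add: h_def)
  finally show ?case .
qed

definition card_above :: "nat set \<Rightarrow> real \<Rightarrow> (nat \<Rightarrow> real) \<Rightarrow> nat" where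
  "card_above I x s = card {j\<in>I. s j \<in> {x..}}"

definition rank_bound :: "nat \<Rightarrow> nat \<Rightarrow> (nat \<Rightarrow> real) \<Rightarrow> (nat \<Rightarrow> real) \<Rightarrow> nat \<Rightarrow> nat" where
  "rank_bound a b s0 s1 i = 1 + card_above {..<a} (s1 i) s0 + card_above ({..<b} - {i}) (s1 i) s1"

lemma measurable_card_above:
  fixes I :: "nat set"
  assumes "g \<in> borel_measurable N" "\<And>j. j \<in> I \<Longrightarrow> (\<lambda>z. h z j) \<in> borel_measurable N"
  shows "(\<lambda>z. card_above I (g z) (h z)) \<in> measurable N (count_space UNIV)"
  unfolding card_above_def atLeast_iff
  using assms by (intro measurable_card_filter[where P="\<lambda>j z. g z \<le> h z j"]) (simp add: pred_def)

lemma fraud_rank_le_rank_bound: "fraud_rank a b s0 s1 i \<le> rank_bound a b s0 s1 i"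
proof -
  have "card {l \<in> {..<b}. s1 i < s1 l \<or> (s1 l = s1 i \<and> l < i)} \<le> card_above ({..<b} - {i}) (s1 i) s1"
    unfolding card_above_def by (intro card_mono) auto
  then show ?thesis
    by (simp add: fraud_rank_def rank_bound_def card_above_def)
qed

lemma sum_rank_bound_le_bp_detected:
  "(\<Sum>i<b. if rank_bound a b s0 s1 i \<le> n then 1 else 0) \<le> real (bp_detected n a b s0 s1)"
proof -
  have "(\<Sum>i<b. if rank_bound a b s0 s1 i \<le> n then 1 else 0)
      = real (card {i\<in>{..<b}. rank_bound a b s0 s1 i \<le> n})"
    by (simp add: sum.If_cases Int_def)
  also have "\<dots> \<le> real (bp_detected n a b s0 s1)"
    unfolding bp_detected_def
    by (intro of_nat_mono card_mono) (auto intro: order_trans[OF fraud_rank_le_rank_bound])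
  finally show ?thesis .
qed

context unit_density
begin

lemma measurable_component:
  "j \<in> I \<Longrightarrow> (\<lambda>x. x j) \<in> borel_measurable (PiM I (\<lambda>_. M))"
  using measurable_component_singleton[of j I "\<lambda>_. M"] measurable_cong_sets[OF refl sets_M]
  by blast

lemma nn_integral_card_above:
  fixes I :: "nat set"
  assumes "finite I" "\<And>c. 0 \<le> g c"
  shows "(\<integral>\<^sup>+\<omega>. ennreal (g (card_above I x \<omega>)) \<partial>PiM I (\<lambda>_. M))
       = ennreal (\<Sum>c\<le>card I. binomial_weight (card I) (1 - F x) c * g c)"
  unfolding card_above_def measure_atLeast[symmetric]
  using prob_space_axioms assms by (intro nn_integral_PiM_card_binomial) auto

lemma measurable_card_above_own_score:
  assumes "i \<in> I" "R \<subseteq> I" "\<And>c. G c \<in> borel_measurable borel"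
  shows "(\<lambda>\<omega>. ennreal (G (card_above R (\<omega> i) \<omega>) (\<omega> i))) \<in> borel_measurable (PiM I (\<lambda>_. M))"
proof (rule measurable_compose_countable[where g="\<lambda>\<omega>. card_above R (\<omega> i) \<omega>"])
  show "(\<lambda>\<omega>. card_above R (\<omega> i) \<omega>) \<in> measurable (PiM I (\<lambda>_. M)) (count_space UNIV)"
    using assms(1,2) by (intro measurable_card_above measurable_component) auto
  fix c
  have G_ennreal: "(\<lambda>y. ennreal (G c y)) \<in> borel_measurable borel"
    using assms(3)[of c] by (rule measurable_compose[OF _ measurable_ennreal])
  show "(\<lambda>\<omega>. ennreal (G c (\<omega> i))) \<in> borel_measurable (PiM I (\<lambda>_. M))"
    by (rule measurable_compose[OF measurable_component G_ennreal]) (rule assms(1))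
qed

lemma nn_integral_card_above_own_score:
  fixes R :: "nat set"
  assumes "finite R" "i \<notin> R"
    and G: "\<And>c. G c \<in> borel_measurable borel" "\<And>y c. 0 \<le> G c y"
  shows "(\<integral>\<^sup>+\<omega>. ennreal (G (card_above R (\<omega> i) \<omega>) (\<omega> i)) \<partial>PiM (insert i R) (\<lambda>_. M))
       = (\<integral>\<^sup>+y. ennreal (f y * (\<Sum>c\<le>card R. binomial_weight (card R) (1 - F y) c * G c y)) \<partial>lborel)"
proof -
  have integrand_measurable: "(\<lambda>\<omega>. ennreal (G (card_above R (\<omega> i) \<omega>) (\<omega> i))) \<in> borel_measurable (PiM (insert i R) (\<lambda>_. M))"
    using G(1) by (intro measurable_card_above_own_score) auto
  have "(\<integral>\<^sup>+\<omega>. ennreal (G (card_above R (\<omega> i) \<omega>) (\<omega> i)) \<partial>PiM (insert i R) (\<lambda>_. M))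
      = (\<integral>\<^sup>+y. \<integral>\<^sup>+\<omega>. ennreal (G (card_above R y (fun_upd \<omega> i y)) y) \<partial>PiM R (\<lambda>_. M) \<partial>M)"
  proof -
    interpret product_prob_space "\<lambda>_. M" by unfold_locales
    show ?thesis
      using product_nn_integral_insert_rev[OF assms(1,2) integrand_measurable]
      by (simp only: fun_upd_same)
  qed
  also have "\<dots> = (\<integral>\<^sup>+y. \<integral>\<^sup>+\<omega>. ennreal (G (card_above R y \<omega>) y) \<partial>PiM R (\<lambda>_. M) \<partial>M)"
  proof -
    have "card_above R y (fun_upd \<omega> i y) = card_above R y \<omega>" for \<omega> y
      using assms(2) unfolding card_above_def by (metis fun_upd_other)
    then show ?thesis
      by simp
  qed
  also have "\<dots> = (\<integral>\<^sup>+y. ennreal (\<Sum>c\<le>card R. binomial_weight (card R) (1 - F y) c * G c y) \<partial>M)"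
    using nn_integral_card_above[OF assms(1), of "\<lambda>c. G c _"] G(2) by (intro nn_integral_cong) simp
  also have "\<dots> = (\<integral>\<^sup>+y. ennreal (f y) * ennreal (\<Sum>c\<le>card R. binomial_weight (card R) (1 - F y) c * G c y) \<partial>lborel)"
  proof -
    note [measurable] = G(1)
    have "(\<lambda>y. ennreal (\<Sum>c\<le>card R. binomial_weight (card R) (1 - F y) c * G c y)) \<in> borel_measurable borel"
      by measurable
    then show ?thesis
      unfolding M_def by (intro nn_integral_density) simp_all
  qed
  also have "\<dots> = (\<integral>\<^sup>+y. ennreal (f y * (\<Sum>c\<le>card R. binomial_weight (card R) (1 - F y) c * G c y)) \<partial>lborel)"
    by (simp add: ennreal_mult' f_nonneg)
  finally show ?thesis .
qed

end

text \<open>P(1 + X + Y \<le> n) for independent X ~ Bin(a, 1 - u) and Y ~ Bin(b - 1, 1 - v).\<close>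

definition detection_prob :: "nat \<Rightarrow> nat \<Rightarrow> nat \<Rightarrow> real \<Rightarrow> real \<Rightarrow> real" where
  "detection_prob n a b u v =
     (\<Sum>\<beta>\<le>b - 1. binomial_weight (b - 1) (1 - v) \<beta> *
        (\<Sum>\<alpha>\<le>a. binomial_weight a (1 - u) \<alpha> * (if 1 + \<alpha> + \<beta> \<le> n then 1 else 0)))"

locale score_densities = d0: unit_density f0 F0 + d1: unit_density f1 F1 for f0 F0 f1 F1
begin

abbreviation "P0 a \<equiv> PiM {..<a} (\<lambda>_. d0.M)"
abbreviation "P1 b \<equiv> PiM {..<b} (\<lambda>_. d1.M)"

definition expected_detected :: "nat \<Rightarrow> nat \<Rightarrow> nat \<Rightarrow> ennreal" where
  "expected_detected n a b = (\<integral>\<^sup>+z. ennreal (real (bp_detected n a b (fst z) (snd z))) \<partial>(P0 a \<Otimes>\<^sub>M P1 b))"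

lemma score_space_eq: "score_space f0 f1 a b = P0 a \<Otimes>\<^sub>M P1 b"
  by (simp add: score_space_def d0.M_def d1.M_def)

lemma pair_prob_space_scores: "pair_prob_space (P0 a) (P1 b)"
  by (simp add: pair_prob_space_def pair_sigma_finite_def prob_space_PiM d0.prob_space_axioms
      d1.prob_space_axioms prob_space_imp_sigma_finite)

lemma measurable_fst_score: "j < a \<Longrightarrow> (\<lambda>z. fst z j) \<in> borel_measurable (P0 a \<Otimes>\<^sub>M P1 b)"
  by (intro measurable_compose[OF measurable_fst d0.measurable_component]) simp

lemma measurable_snd_score: "i < b \<Longrightarrow> (\<lambda>z. snd z i) \<in> borel_measurable (P0 a \<Otimes>\<^sub>M P1 b)"
  by (intro measurable_compose[OF measurable_snd d1.measurable_component]) simp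

lemma measurable_rank_bound_indicator:
  assumes "i < b"
  shows "(\<lambda>z. ennreal (if rank_bound a b (fst z) (snd z) i \<le> n then 1 else 0))
           \<in> borel_measurable (P0 a \<Otimes>\<^sub>M P1 b)"
  unfolding rank_bound_def
proof (rule measurable_compose_countable[where g="\<lambda>z. card_above {..<a} (snd z i) (fst z)"])
  show "(\<lambda>z. card_above {..<a} (snd z i) (fst z)) \<in> measurable (P0 a \<Otimes>\<^sub>M P1 b) (count_space UNIV)"
    using assms by (intro measurable_card_above measurable_fst_score measurable_snd_score) auto
  fix c
  show "(\<lambda>z. ennreal (if 1 + c + card_above ({..<b} - {i}) (snd z i) (snd z) \<le> n then 1 else 0))
      \<in> borel_measurable (P0 a \<Otimes>\<^sub>M P1 b)"
  proof (rule measurable_compose_countable[where g="\<lambda>z. card_above ({..<b} - {i}) (snd z i) (snd z)"])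
    show "(\<lambda>z. card_above ({..<b} - {i}) (snd z i) (snd z)) \<in> measurable (P0 a \<Otimes>\<^sub>M P1 b) (count_space UNIV)"
      using assms by (intro measurable_card_above measurable_snd_score) auto
  qed simp
qed

text \<open>Conditionally on its own score y, the rank bound of a fraud is 1 plus two independent
  binomial counts, of non-frauds (success probability 1 - F0 y) and of the other frauds
  (success probability 1 - F1 y) scoring at least y.\<close>

lemma nn_integral_rank_bound_indicator:
  assumes "i < b"
  shows "(\<integral>\<^sup>+z. ennreal (if rank_bound a b (fst z) (snd z) i \<le> n then 1 else 0) \<partial>(P0 a \<Otimes>\<^sub>M P1 b))
       = (\<integral>\<^sup>+y. ennreal (f1 y * detection_prob n a b (F0 y) (F1 y)) \<partial>lborel)"
proof -
  interpret pair_prob_space "P0 a" "P1 b"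
    by (rule pair_prob_space_scores)
  define R where "R = {..<b} - {i}"
  define G where "G c y = (\<Sum>\<alpha>\<le>a. binomial_weight a (1 - F0 y) \<alpha> * (if 1 + \<alpha> + c \<le> n then 1 else (0::real)))" for c y
  have G_nonneg: "0 \<le> G c y" for c y
    unfolding G_def using d0.F_nonneg[of y] d0.F_le_1[of y]
    by (intro sum_nonneg mult_nonneg_nonneg binomial_weight_nonneg) auto
  have G_measurable: "G c \<in> borel_measurable borel" for c
    unfolding G_def[abs_def] by measurable
  have "(\<integral>\<^sup>+z. ennreal (if 1 + card_above {..<a} (snd z i) (fst z) + card_above R (snd z i) (snd z) \<le> n then 1 else 0)
            \<partial>(P0 a \<Otimes>\<^sub>M P1 b))
      = (\<integral>\<^sup>+s1. \<integral>\<^sup>+s0. ennreal (if 1 + card_above {..<a} (s1 i) s0 + card_above R (s1 i) s1 \<le> n then 1 else 0)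
            \<partial>P0 a \<partial>P1 b)"
    using nn_integral_snd[OF measurable_rank_bound_indicator[OF assms]] by (simp add: R_def rank_bound_def)
  also have "\<dots> = (\<integral>\<^sup>+s1. ennreal (G (card_above R (s1 i) s1) (s1 i)) \<partial>PiM (insert i R) (\<lambda>_. d1.M))"
  proof -
    have "{..<b} = insert i R"
      using assms by (auto simp: R_def)
    moreover have "(\<integral>\<^sup>+s0. ennreal (if 1 + card_above {..<a} y s0 + c \<le> n then 1 else 0) \<partial>P0 a) = ennreal (G c y)" for c y
      unfolding G_def by (subst d0.nn_integral_card_above) (auto simp: add.assoc)
    ultimately show ?thesis
      by simp
  qed
  also have "\<dots> = (\<integral>\<^sup>+y. ennreal (f1 y * detection_prob n a b (F0 y) (F1 y)) \<partial>lborel)"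
  proof -
    have "card R = b - 1"
      using assms by (simp add: R_def)
    then show ?thesis
      using G_measurable G_nonneg
      by (subst d1.nn_integral_card_above_own_score) (auto simp: R_def detection_prob_def G_def)
  qed
  finally show ?thesis
    by (simp add: R_def rank_bound_def)
qed

lemma expected_detected_ge:
  "of_nat b * (\<integral>\<^sup>+y. ennreal (f1 y * detection_prob n a b (F0 y) (F1 y)) \<partial>lborel) \<le> expected_detected n a b"
proof -
  let ?ind = "\<lambda>i z. ennreal (if rank_bound a b (fst z) (snd z) i \<le> n then 1 else 0)"
  have "(\<Sum>i<b. \<integral>\<^sup>+z. ?ind i z \<partial>(P0 a \<Otimes>\<^sub>M P1 b))
      = (\<Sum>i<b. \<integral>\<^sup>+y. ennreal (f1 y * detection_prob n a b (F0 y) (F1 y)) \<partial>lborel)"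
    by (intro sum.cong refl nn_integral_rank_bound_indicator) simp
  then have "of_nat b * (\<integral>\<^sup>+y. ennreal (f1 y * detection_prob n a b (F0 y) (F1 y)) \<partial>lborel)
      = (\<Sum>i<b. \<integral>\<^sup>+z. ?ind i z \<partial>(P0 a \<Otimes>\<^sub>M P1 b))"
    by simp
  also have "\<dots> = (\<integral>\<^sup>+z. (\<Sum>i<b. ?ind i z) \<partial>(P0 a \<Otimes>\<^sub>M P1 b))"
    by (intro nn_integral_sum[symmetric] measurable_rank_bound_indicator) auto
  also have "\<dots> \<le> expected_detected n a b"
    unfolding expected_detected_def
  proof (intro nn_integral_mono)
    fix z
    have "(\<Sum>i<b. ?ind i z) = ennreal (\<Sum>i<b. if rank_bound a b (fst z) (snd z) i \<le> n then 1 else 0)"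
      by (subst sum_ennreal[symmetric]) auto
    also have "\<dots> \<le> ennreal (real (bp_detected n a b (fst z) (snd z)))"
      by (intro ennreal_leI sum_rank_bound_le_bp_detected)
    finally show "(\<Sum>i<b. ?ind i z) \<le> ennreal (real (bp_detected n a b (fst z) (snd z)))" .
  qed
  finally show ?thesis .
qed

end

section \<open>The order-statistic integrals\<close>

lemma os_density_of_nat:
  "1 \<le> l \<Longrightarrow> os_density F f m (int l) x = unif_os_density m l (F x) * f x"
  by (simp add: os_density_def unif_os_density_def)

text \<open>The j-th term is b P(Y = j - 1) P(1 + X + (j - 1) \<le> n), with X, Y as in detection_prob.\<close>

lemma sum_binomial_tail_le_detection_prob:
  assumes "0 \<le> u" "u \<le> 1" "0 \<le> v" "v \<le> 1"
  shows "(\<Sum>j=1..min n b. if n < a + j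
            then binomial_tail a (a + j - n) u * unif_os_density b (b - j + 1) v else 0)
         \<le> real b * detection_prob n a b u v"
proof -
  define Q where "Q \<beta> = (\<Sum>\<alpha>\<le>a. binomial_weight a (1 - u) \<alpha> * (if 1 + \<alpha> + \<beta> \<le> n then 1 else (0::real)))" for \<beta>
  have Q_nonneg: "0 \<le> Q \<beta>" for \<beta>
    unfolding Q_def using assms by (intro sum_nonneg mult_nonneg_nonneg binomial_weight_nonneg) auto
  have "(\<Sum>j=1..min n b. if n < a + j
            then binomial_tail a (a + j - n) u * unif_os_density b (b - j + 1) v else 0)
       \<le> (\<Sum>j=1..min n b. real b * (binomial_weight (b - 1) (1 - v) (j - 1) * Q (j - 1)))"
  proof (intro sum_mono)
    fix j assume j: "j \<in> {1..min n b}"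
    show "(if n < a + j then binomial_tail a (a + j - n) u * unif_os_density b (b - j + 1) v else 0)
          \<le> real b * (binomial_weight (b - 1) (1 - v) (j - 1) * Q (j - 1))"
    proof (cases "n < a + j")
      case True
      have "binomial_tail a (a + j - n) u = Q (j - 1)"
        unfolding binomial_tail_eq_sum_binomial_weight Q_def using True j
        by (intro sum.cong) auto
      moreover have "unif_os_density b (b - j + 1) v = real b * binomial_weight (b - 1) (1 - v) (j - 1)"
        using j by (intro unif_os_density_eq_binomial_weight) auto
      ultimately show ?thesis
        using True by simp
    next
      case False
      then show ?thesis
        using Q_nonneg assms by (simp add: binomial_weight_nonneg)
    qed
  qed
  also have "\<dots> = real b * (\<Sum>\<beta><min n b. binomial_weight (b - 1) (1 - v) \<beta> * Q \<beta>)"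
    by (simp add: sum.atLeast1_atMost_eq sum_distrib_left)
  also have "\<dots> \<le> real b * (\<Sum>\<beta>\<le>b - 1. binomial_weight (b - 1) (1 - v) \<beta> * Q \<beta>)"
    using Q_nonneg assms
    by (intro mult_left_mono sum_mono2) (auto intro!: mult_nonneg_nonneg binomial_weight_nonneg)
  also have "\<dots> = real b * detection_prob n a b u v"
    by (simp add: detection_prob_def Q_def)
  finally show ?thesis .
qed

lemma set_integral_eq_nn_integral_vanishing:
  fixes g :: "real \<Rightarrow> real"
  assumes "g \<in> borel_measurable borel" "\<And>y. 0 \<le> g y" "\<And>y. y \<notin> A \<Longrightarrow> g y = 0"
  shows "(LINT y:A|lborel. g y) = enn2real (\<integral>\<^sup>+y. ennreal (g y) \<partial>lborel)"
proof -
  have "(\<lambda>y. indicator A y *\<^sub>R g y) = g"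
    using assms(3) by (force simp: indicator_def)
  then show ?thesis
    unfolding set_lebesgue_integral_def using assms(1,2) by (simp add: integral_eq_nn_integral)
qed

context unit_density
begin

lemma set_integral_unif_os_density_comp_F:
  assumes "1 \<le> i" "0 \<le> s" "s \<le> 1"
  shows "(LINT t:{0..s}|lborel. unif_os_density m i (F t) * f t) = binomial_tail m i (F s)"
proof -
  have nonneg: "0 \<le> unif_os_density m i (F t) * f t" for t
    using F_nonneg F_le_1 f_nonneg by (intro mult_nonneg_nonneg unif_os_density_nonneg) auto
  have "(LINT t:{0..s}|lborel. unif_os_density m i (F t) * f t)
      = enn2real (\<integral>\<^sup>+t. ennreal (indicator {0..s} t *\<^sub>R (unif_os_density m i (F t) * f t)) \<partial>lborel)"
    unfolding set_lebesgue_integral_def using nonneg by (intro integral_eq_nn_integral) auto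
  also have "(\<integral>\<^sup>+t. ennreal (indicator {0..s} t *\<^sub>R (unif_os_density m i (F t) * f t)) \<partial>lborel)
      = (\<integral>\<^sup>+t. ennreal (unif_os_density m i (F t) * f t) * indicator {..s} t \<partial>lborel)"
  proof (intro nn_integral_cong)
    fix t
    show "ennreal (indicator {0..s} t *\<^sub>R (unif_os_density m i (F t) * f t))
        = ennreal (unif_os_density m i (F t) * f t) * indicator {..s} t"
      using f_outside[of t] assms by (cases "t < 0") (auto simp: indicator_def)
  qed
  also have "\<dots> = (\<integral>\<^sup>+u. ennreal (unif_os_density m i u) * indicator {0..F s} u \<partial>lborel)"
    by (rule nn_integral_comp_F) measurable
  also have "\<dots> = ennreal (binomial_tail m i (F s))"
    using assms F_nonneg F_le_1 by (intro nn_integral_unif_os_density) auto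
  finally show ?thesis
    using binomial_tail_nonneg[of "F s"] F_nonneg F_le_1 by simp
qed

end

context score_densities
begin

definition F_W_integrand :: "nat \<Rightarrow> nat \<Rightarrow> nat \<Rightarrow> nat \<Rightarrow> real \<Rightarrow> real" where
  "F_W_integrand n a b j y = f1 y * (if n < a + j
      then binomial_tail a (a + j - n) (F0 y) * unif_os_density b (b - j + 1) (F1 y) else 0)"

lemma F_W_integrand_nonneg: "0 \<le> F_W_integrand n a b j y"
  unfolding F_W_integrand_def using d0.F_nonneg d0.F_le_1 d1.F_nonneg d1.F_le_1 d1.f_nonneg
  by (auto intro!: mult_nonneg_nonneg binomial_tail_nonneg unif_os_density_nonneg)

lemma F_W_integrand_measurable [measurable]: "F_W_integrand n a b j \<in> borel_measurable borel"
  unfolding F_W_integrand_def[abs_def] by measurable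

text \<open>At w = 0 the inner integral of F_W runs over [0, s1]; the substitution u = F0(s0)
  turns it into a binomial tail.\<close>

lemma set_integral_os_density_product:
  assumes "1 \<le> j" "j \<le> b" "s1 \<in> {0..1}"
  shows "(LINT s0:{0..0 + s1}|lborel.
            os_density F0 f0 a (int a - int n + int j) s0 * os_density F1 f1 b (int b - int j + 1) s1)
       = F_W_integrand n a b j s1"
proof (cases "n < a + j")
  case True
  have "int b - int j + 1 = int (b - j + 1)" "int a - int n + int j = int (a + j - n)"
    using assms True by auto
  then have "os_density F1 f1 b (int b - int j + 1) s = unif_os_density b (b - j + 1) (F1 s) * f1 s"
      "os_density F0 f0 a (int a - int n + int j) s = unif_os_density a (a + j - n) (F0 s) * f0 s" for s
    using True by (simp_all only:) (rule os_density_of_nat, simp)+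
  moreover have "(LINT s0:{0..s1}|lborel. unif_os_density a (a + j - n) (F0 s0) * f0 s0)
      = binomial_tail a (a + j - n) (F0 s1)"
    using True assms(3) by (intro d0.set_integral_unif_os_density_comp_F) auto
  ultimately show ?thesis
    using True by (simp add: F_W_integrand_def)
next
  case False
  then show ?thesis
    by (simp add: os_density_def F_W_integrand_def)
qed

lemma F_W_eq_nn_integral:
  assumes "1 \<le> j" "j \<le> b"
  shows "F_W F0 f0 F1 f1 n a b j 0 = enn2real (\<integral>\<^sup>+y. ennreal (F_W_integrand n a b j y) \<partial>lborel)"
proof -
  have "F_W F0 f0 F1 f1 n a b j 0 = (LINT y:{0..1}|lborel. F_W_integrand n a b j y)"
    unfolding F_W_def Let_def using set_integral_os_density_product[OF assms]
    by (intro set_lebesgue_integral_cong) auto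
  also have "\<dots> = enn2real (\<integral>\<^sup>+y. ennreal (F_W_integrand n a b j y) \<partial>lborel)"
    using d1.f_outside
    by (intro set_integral_eq_nn_integral_vanishing F_W_integrand_measurable F_W_integrand_nonneg)
       (simp add: F_W_integrand_def)
  finally show ?thesis .
qed

lemma expected_detected_le: "expected_detected n a b \<le> of_nat b"
proof -
  interpret pair_prob_space "P0 a" "P1 b"
    by (rule pair_prob_space_scores)
  have "bp_detected n a b s0 s1 \<le> b" for s0 s1
    unfolding bp_detected_def using card_mono[of "{..<b}" "{i\<in>{..<b}. fraud_rank a b s0 s1 i \<le> n}"]
    by auto
  then have "expected_detected n a b \<le> (\<integral>\<^sup>+z. ennreal (real b) \<partial>(P0 a \<Otimes>\<^sub>M P1 b))"
    unfolding expected_detected_def by (intro nn_integral_mono) simp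
  also have "\<dots> = of_nat b"
    by (simp add: P.emeasure_space_1 ennreal_of_nat_eq_real_of_nat)
  finally show ?thesis .
qed

lemma expected_detected_finite: "expected_detected n a b < \<top>"
  by (rule le_less_trans[OF expected_detected_le]) (simp add: of_nat_less_top)

lemma nn_integral_sum_F_W_integrand_le:
  "(\<integral>\<^sup>+y. ennreal (\<Sum>j=1..min n b. F_W_integrand n a b j y) \<partial>lborel) \<le> expected_detected n a b"
proof -
  have "(\<integral>\<^sup>+y. ennreal (\<Sum>j=1..min n b. F_W_integrand n a b j y) \<partial>lborel)
      \<le> (\<integral>\<^sup>+y. of_nat b * ennreal (f1 y * detection_prob n a b (F0 y) (F1 y)) \<partial>lborel)"
  proof (intro nn_integral_mono)
    fix y
    have "(\<Sum>j=1..min n b. F_W_integrand n a b j y) \<le> f1 y * (real b * detection_prob n a b (F0 y) (F1 y))"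
      unfolding F_W_integrand_def sum_distrib_left[symmetric]
      using d0.F_nonneg d0.F_le_1 d1.F_nonneg d1.F_le_1 d1.f_nonneg
      by (intro mult_left_mono sum_binomial_tail_le_detection_prob) auto
    then show "ennreal (\<Sum>j=1..min n b. F_W_integrand n a b j y)
        \<le> of_nat b * ennreal (f1 y * detection_prob n a b (F0 y) (F1 y))"
      by (simp add: ennreal_of_nat_eq_real_of_nat ennreal_mult'[symmetric] ennreal_leI mult.left_commute)
  qed
  also have "\<dots> = of_nat b * (\<integral>\<^sup>+y. ennreal (f1 y * detection_prob n a b (F0 y) (F1 y)) \<partial>lborel)"
    by (rule nn_integral_cmult) (unfold detection_prob_def, measurable)
  also have "\<dots> \<le> expected_detected n a b"
    by (rule expected_detected_ge)
  finally show ?thesis .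
qed

lemma sum_F_W_le_expected_detected:
  "(\<Sum>j=1..min n b. F_W F0 f0 F1 f1 n a b j 0) \<le> enn2real (expected_detected n a b)"
proof -
  have sum_nn: "(\<integral>\<^sup>+y. ennreal (\<Sum>j=1..min n b. F_W_integrand n a b j y) \<partial>lborel)
      = (\<Sum>j=1..min n b. \<integral>\<^sup>+y. ennreal (F_W_integrand n a b j y) \<partial>lborel)"
    using F_W_integrand_nonneg
    by (simp add: sum_ennreal[symmetric] nn_integral_sum del: sum_ennreal)
  have finite: "(\<integral>\<^sup>+y. ennreal (F_W_integrand n a b j y) \<partial>lborel) < \<top>" if "j \<in> {1..min n b}" for j
  proof -
    have "(\<integral>\<^sup>+y. ennreal (F_W_integrand n a b j y) \<partial>lborel)
        \<le> (\<integral>\<^sup>+y. ennreal (\<Sum>j=1..min n b. F_W_integrand n a b j y) \<partial>lborel)"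
      using that F_W_integrand_nonneg
      by (intro nn_integral_mono ennreal_leI member_le_sum) auto
    then show ?thesis
      using nn_integral_sum_F_W_integrand_le expected_detected_finite by (meson le_less_trans)
  qed
  have "(\<Sum>j=1..min n b. F_W F0 f0 F1 f1 n a b j 0)
      = (\<Sum>j=1..min n b. enn2real (\<integral>\<^sup>+y. ennreal (F_W_integrand n a b j y) \<partial>lborel))"
    by (intro sum.cong refl F_W_eq_nn_integral) auto
  also have "\<dots> = enn2real (\<Sum>j=1..min n b. \<integral>\<^sup>+y. ennreal (F_W_integrand n a b j y) \<partial>lborel)"
    using finite by (subst enn2real_sum) auto
  also have "\<dots> = enn2real (\<integral>\<^sup>+y. ennreal (\<Sum>j=1..min n b. F_W_integrand n a b j y) \<partial>lborel)"
    by (simp only: sum_nn)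
  also have "\<dots> \<le> enn2real (expected_detected n a b)"
    using nn_integral_sum_F_W_integrand_le expected_detected_finite by (intro enn2real_mono) auto
  finally show ?thesis .
qed

end

section \<open>Removing one fraud\<close>

definition skip :: "nat \<Rightarrow> nat \<Rightarrow> nat" where
  "skip l i = (if i < l then i else Suc i)"

definition drop_sample :: "nat \<Rightarrow> nat \<Rightarrow> (nat \<Rightarrow> real) \<Rightarrow> (nat \<Rightarrow> real)" where
  "drop_sample l b s = (\<lambda>i\<in>{..<b}. s (skip l i))"

lemma skip_less_iff: "skip l x < skip l y \<longleftrightarrow> x < y"
  by (auto simp: skip_def)

lemma inj_skip: "inj (skip l)"
  by (auto simp: inj_def skip_def split: if_splits)

lemma fraud_rank_drop_sample_le:
  assumes "i < b"
  shows "fraud_rank a b s0 (drop_sample l b s1) i \<le> fraud_rank a (Suc b) s0 s1 (skip l i)"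
proof -
  let ?i = "skip l i"
  let ?above = "\<lambda>m. s1 ?i < s1 m \<or> (s1 m = s1 ?i \<and> m < ?i)"
  have "{m\<in>{..<b}. drop_sample l b s1 i < drop_sample l b s1 m
            \<or> (drop_sample l b s1 m = drop_sample l b s1 i \<and> m < i)}
      = {m\<in>{..<b}. ?above (skip l m)}"
    using assms by (auto simp: drop_sample_def skip_less_iff)
  moreover have "card {m\<in>{..<b}. ?above (skip l m)} \<le> card {m\<in>{..<Suc b}. ?above m}"
  proof (rule card_inj_on_le[where f="skip l"])
    show "inj_on (skip l) {m\<in>{..<b}. ?above (skip l m)}"
      using inj_skip by (auto intro: inj_on_subset)
    show "skip l ` {m\<in>{..<b}. ?above (skip l m)} \<subseteq> {m\<in>{..<Suc b}. ?above m}"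
      by (auto simp: skip_def)
  qed auto
  moreover have "drop_sample l b s1 i = s1 ?i"
    using assms by (simp add: drop_sample_def)
  ultimately show ?thesis
    unfolding fraud_rank_def by simp
qed

lemma card_detected_Diff_singleton_le:
  assumes "l < Suc b"
  shows "card ({i\<in>{..<Suc b}. fraud_rank a (Suc b) s0 s1 i \<le> n} - {l}) \<le> bp_detected n a b s0 (drop_sample l b s1)"
proof -
  let ?X = "{i\<in>{..<Suc b}. fraud_rank a (Suc b) s0 s1 i \<le> n}"
  let ?Y = "{i\<in>{..<b}. fraud_rank a b s0 (drop_sample l b s1) i \<le> n}"
  have "?X - {l} \<subseteq> skip l ` ?Y"
  proof
    fix i assume i: "i \<in> ?X - {l}"
    define i' where "i' = (if i < l then i else i - 1)"
    have "skip l i' = i" "i' < b"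
      using i assms by (auto simp: skip_def i'_def)
    then show "i \<in> skip l ` ?Y"
      using fraud_rank_drop_sample_le[of i' b a s0 l s1] i by force
  qed
  then have "card (?X - {l}) \<le> card (skip l ` ?Y)"
    by (intro card_mono) auto
  also have "\<dots> \<le> card ?Y"
    by (rule card_image_le) auto
  finally show ?thesis
    unfolding bp_detected_def .
qed

text \<open>Deleting fraud l lowers no other fraud's rank, so all detected frauds except l stay
  detected; summing over l counts each detected fraud b times.\<close>

lemma bp_detected_Suc_le_sum_drop_sample:
  "real b * real (bp_detected n a (Suc b) s0 s1)
     \<le> (\<Sum>l<Suc b. real (bp_detected n a b s0 (drop_sample l b s1)))"
proof -
  let ?X = "{i\<in>{..<Suc b}. fraud_rank a (Suc b) s0 s1 i \<le> n}"
  have "real (card (?X - {l})) = real (card ?X) - (if l \<in> ?X then 1 else 0)" for l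
  proof (cases "l \<in> ?X")
    case True
    have "finite ?X"
      by simp
    then have "1 \<le> card ?X"
      using True by (simp add: Suc_le_eq card_gt_0_iff) blast
    then show ?thesis
      using True by (simp add: card_Diff_singleton of_nat_diff)
  qed simp
  then have "(\<Sum>l<Suc b. real (card (?X - {l})))
      = real (Suc b) * real (card ?X) - (\<Sum>l<Suc b. if l \<in> ?X then 1 else 0)"
    by (simp add: sum_subtractf)
  also have "(\<Sum>l<Suc b. if l \<in> ?X then 1 else 0)
      = (\<Sum>l<Suc b. if fraud_rank a (Suc b) s0 s1 l \<le> n then 1 else (0::real))"
    by (intro sum.cong) auto
  also have "\<dots> = real (card ?X)"
    by (simp add: sum.inter_filter[symmetric] del: sum.lessThan_Suc)
  finally have "(\<Sum>l<Suc b. real (card (?X - {l}))) = real b * real (card ?X)"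
    by (simp add: algebra_simps)
  moreover have "(\<Sum>l<Suc b. real (card (?X - {l}))) \<le> (\<Sum>l<Suc b. real (bp_detected n a b s0 (drop_sample l b s1)))"
    by (intro sum_mono of_nat_mono card_detected_Diff_singleton_le) auto
  ultimately show ?thesis
    unfolding bp_detected_def by simp
qed

context score_densities
begin

lemma measurable_fraud_rank:
  assumes "i < b"
  shows "(\<lambda>z. fraud_rank a b (fst z) (snd z) i) \<in> measurable (P0 a \<Otimes>\<^sub>M P1 b) (count_space UNIV)"
proof -
  have ahead: "(\<lambda>z. card {l\<in>{..<b}. snd z i < snd z l \<or> (snd z l = snd z i \<and> l < i)})
      \<in> measurable (P0 a \<Otimes>\<^sub>M P1 b) (count_space UNIV)"
  proof (rule measurable_card_filter[where P="\<lambda>l z. snd z i < snd z l \<or> (snd z l = snd z i \<and> l < i)"])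
    fix l assume "l \<in> {..<b}"
    note [measurable] = measurable_snd_score[OF assms] measurable_snd_score[of l]
    show "Measurable.pred (P0 a \<Otimes>\<^sub>M P1 b) (\<lambda>z. snd z i < snd z l \<or> (snd z l = snd z i \<and> l < i))"
      using \<open>l \<in> {..<b}\<close> by measurable
  qed
  have "(\<lambda>z. card_above {..<a} (snd z i) (fst z)) \<in> measurable (P0 a \<Otimes>\<^sub>M P1 b) (count_space UNIV)"
    using assms by (intro measurable_card_above measurable_fst_score measurable_snd_score) auto
  then have below: "(\<lambda>z. card {j\<in>{..<a}. snd z i \<le> fst z j}) \<in> measurable (P0 a \<Otimes>\<^sub>M P1 b) (count_space UNIV)"
    unfolding card_above_def atLeast_iff .
  show ?thesis
    unfolding fraud_rank_def
  proof (rule measurable_compose_countable[OF _ below])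
    fix c
    show "(\<lambda>z. 1 + c + card {l\<in>{..<b}. snd z i < snd z l \<or> (snd z l = snd z i \<and> l < i)})
        \<in> measurable (P0 a \<Otimes>\<^sub>M P1 b) (count_space UNIV)"
      by (rule measurable_compose_countable[OF _ ahead]) simp
  qed
qed

lemma measurable_bp_detected [measurable]:
  "(\<lambda>z. real (bp_detected n a b (fst z) (snd z))) \<in> borel_measurable (P0 a \<Otimes>\<^sub>M P1 b)"
proof -
  have "(\<lambda>z. bp_detected n a b (fst z) (snd z)) \<in> measurable (P0 a \<Otimes>\<^sub>M P1 b) (count_space UNIV)"
    unfolding bp_detected_def
  proof (rule measurable_card_filter[where P="\<lambda>i z. fraud_rank a b (fst z) (snd z) i \<le> n"])
    fix i assume "i \<in> {..<b}"
    then have "(\<lambda>z. fraud_rank a b (fst z) (snd z) i) \<in> measurable (P0 a \<Otimes>\<^sub>M P1 b) (count_space UNIV)"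
      by (intro measurable_fraud_rank) simp
    then show "Measurable.pred (P0 a \<Otimes>\<^sub>M P1 b) (\<lambda>z. fraud_rank a b (fst z) (snd z) i \<le> n)"
      by measurable
  qed
  then show ?thesis
    by (rule measurable_compose) simp
qed

lemma measurable_drop_sample: "drop_sample l b \<in> measurable (P1 (Suc b)) (P1 b)"
  unfolding drop_sample_def
  by (intro measurable_restrict measurable_component_singleton) (auto simp: skip_def)

lemma distr_drop_sample:
  assumes "l < Suc b"
  shows "distr (P1 (Suc b)) (P1 b) (drop_sample l b) = P1 b"
proof -
  have "distr (P1 (Suc b)) (\<Pi>\<^sub>M i\<in>{..<b}. d1.M) (\<lambda>\<omega>. \<lambda>i\<in>{..<b}. \<omega> (skip l i))
      = (\<Pi>\<^sub>M i\<in>{..<b}. d1.M)"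
  proof (rule distr_PiM_reindex)
    show "inj_on (skip l) {..<b}"
      using inj_skip inj_on_subset by blast
  qed (auto simp: skip_def d1.prob_space_axioms)
  then show ?thesis
    by (simp add: drop_sample_def[abs_def])
qed

lemma expected_detected_drop_sample:
  assumes "l < Suc b"
  shows "(\<integral>\<^sup>+z. ennreal (real (bp_detected n a b (fst z) (drop_sample l b (snd z)))) \<partial>(P0 a \<Otimes>\<^sub>M P1 (Suc b)))
       = expected_detected n a b"
proof -
  interpret p1: pair_prob_space "P0 a" "P1 (Suc b)"
    by (rule pair_prob_space_scores)
  interpret p2: pair_prob_space "P0 a" "P1 b"
    by (rule pair_prob_space_scores)
  have m: "(\<lambda>z. ennreal (real (bp_detected n a b (fst z) (snd z)))) \<in> borel_measurable (P0 a \<Otimes>\<^sub>M P1 b)"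
    by measurable
  have mp: "(\<lambda>z. (fst z, drop_sample l b (snd z))) \<in> measurable (P0 a \<Otimes>\<^sub>M P1 (Suc b)) (P0 a \<Otimes>\<^sub>M P1 b)"
    by (intro measurable_Pair measurable_fst measurable_compose[OF measurable_snd measurable_drop_sample])
  have "(\<integral>\<^sup>+z. ennreal (real (bp_detected n a b (fst z) (drop_sample l b (snd z)))) \<partial>(P0 a \<Otimes>\<^sub>M P1 (Suc b)))
      = (\<integral>\<^sup>+s0. \<integral>\<^sup>+s1. ennreal (real (bp_detected n a b s0 (drop_sample l b s1))) \<partial>P1 (Suc b) \<partial>P0 a)"
    using p1.M2.nn_integral_fst[OF measurable_compose[OF mp m]] by simp
  also have "\<dots> = (\<integral>\<^sup>+s0. \<integral>\<^sup>+t. ennreal (real (bp_detected n a b s0 t)) \<partial>P1 b \<partial>P0 a)"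
  proof (intro nn_integral_cong)
    fix s0 assume "s0 \<in> space (P0 a)"
    then have "(\<lambda>t. ennreal (real (bp_detected n a b s0 t))) \<in> borel_measurable (P1 b)"
      using measurable_Pair2[OF m] by simp
    then have "(\<integral>\<^sup>+t. ennreal (real (bp_detected n a b s0 t)) \<partial>distr (P1 (Suc b)) (P1 b) (drop_sample l b))
        = (\<integral>\<^sup>+s1. ennreal (real (bp_detected n a b s0 (drop_sample l b s1))) \<partial>P1 (Suc b))"
      using nn_integral_distr[OF measurable_drop_sample] by simp
    then show "(\<integral>\<^sup>+s1. ennreal (real (bp_detected n a b s0 (drop_sample l b s1))) \<partial>P1 (Suc b))
        = (\<integral>\<^sup>+t. ennreal (real (bp_detected n a b s0 t)) \<partial>P1 b)"
      by (simp only: distr_drop_sample[OF assms])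
  qed
  also have "\<dots> = expected_detected n a b"
    unfolding expected_detected_def using p2.M2.nn_integral_fst[OF m] by simp
  finally show ?thesis .
qed

lemma expected_detected_Suc_le:
  "of_nat b * expected_detected n a (Suc b) \<le> of_nat (Suc b) * expected_detected n a b"
proof -
  have m: "(\<lambda>z. ennreal (real (bp_detected n a b (fst z) (drop_sample l b (snd z)))))
      \<in> borel_measurable (P0 a \<Otimes>\<^sub>M P1 (Suc b))" for l
  proof -
    have "(\<lambda>z. (fst z, drop_sample l b (snd z))) \<in> measurable (P0 a \<Otimes>\<^sub>M P1 (Suc b)) (P0 a \<Otimes>\<^sub>M P1 b)"
      by (intro measurable_Pair measurable_fst measurable_compose[OF measurable_snd measurable_drop_sample])
    from measurable_compose[OF this measurable_bp_detected[THEN measurable_compose[OF _ measurable_ennreal]]]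
    show ?thesis
      by simp
  qed
  have "of_nat b * expected_detected n a (Suc b)
      = (\<integral>\<^sup>+z. ennreal (real b * real (bp_detected n a (Suc b) (fst z) (snd z))) \<partial>(P0 a \<Otimes>\<^sub>M P1 (Suc b)))"
    unfolding expected_detected_def
    by (subst nn_integral_cmult[symmetric]) (auto simp: ennreal_mult ennreal_of_nat_eq_real_of_nat)
  also have "\<dots> \<le> (\<integral>\<^sup>+z. (\<Sum>l<Suc b. ennreal (real (bp_detected n a b (fst z) (drop_sample l b (snd z)))))
                 \<partial>(P0 a \<Otimes>\<^sub>M P1 (Suc b)))"
  proof (intro nn_integral_mono)
    fix z
    have "ennreal (real b * real (bp_detected n a (Suc b) (fst z) (snd z)))
        \<le> ennreal (\<Sum>l<Suc b. real (bp_detected n a b (fst z) (drop_sample l b (snd z))))"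
      by (intro ennreal_leI bp_detected_Suc_le_sum_drop_sample)
    then show "ennreal (real b * real (bp_detected n a (Suc b) (fst z) (snd z)))
        \<le> (\<Sum>l<Suc b. ennreal (real (bp_detected n a b (fst z) (drop_sample l b (snd z)))))"
      by (subst sum_ennreal) auto
  qed
  also have "\<dots> = (\<Sum>l<Suc b. \<integral>\<^sup>+z. ennreal (real (bp_detected n a b (fst z) (drop_sample l b (snd z))))
                 \<partial>(P0 a \<Otimes>\<^sub>M P1 (Suc b)))"
    using m by (intro nn_integral_sum) auto
  also have "\<dots> = (\<Sum>l<Suc b. expected_detected n a b)"
    by (intro sum.cong refl expected_detected_drop_sample) simp
  also have "\<dots> = of_nat (Suc b) * expected_detected n a b"
    by simp
  finally show ?thesis .
qed

end

section \<open>Poisson size biasing\<close>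

lemma nn_integral_poisson_size_bias:
  fixes g :: "nat \<Rightarrow> real"
  assumes "0 < \<mu>" "\<And>k. 0 \<le> g k"
  shows "(\<integral>\<^sup>+k. ennreal (real k * g k) \<partial>poisson_pmf \<mu>)
       = ennreal \<mu> * (\<integral>\<^sup>+k. ennreal (g (Suc k)) \<partial>poisson_pmf \<mu>)"
proof -
  define t where "t k = ennreal (pmf (poisson_pmf \<mu>) k) * ennreal (real k * g k)" for k
  have t_Suc: "t (Suc k) = ennreal \<mu> * (ennreal (pmf (poisson_pmf \<mu>) k) * ennreal (g (Suc k)))" for k
  proof -
    have "pmf (poisson_pmf \<mu>) (Suc k) * (real (Suc k) * g (Suc k)) = \<mu> * (pmf (poisson_pmf \<mu>) k * g (Suc k))"
      using assms(1) by (simp add: field_simps del: of_nat_Suc)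
    then show ?thesis
      unfolding t_def using assms
      by (simp add: ennreal_mult'[symmetric] ennreal_mult''[symmetric] mult.assoc)
  qed
  have "(\<Sum>k. t k) = (\<Sum>k. t (Suc k))"
    using sums_Suc[OF summable_sums[of "\<lambda>k. t (Suc k)"]] by (simp add: t_def sums_iff)
  moreover have "(\<integral>\<^sup>+k. ennreal (real k * g k) \<partial>poisson_pmf \<mu>) = (\<Sum>k. t k)"
    by (simp add: nn_integral_measure_pmf nn_integral_count_space_nat t_def)
  moreover have "(\<integral>\<^sup>+k. ennreal (g (Suc k)) \<partial>poisson_pmf \<mu>)
      = (\<Sum>k. ennreal (pmf (poisson_pmf \<mu>) k) * ennreal (g (Suc k)))"
    by (simp add: nn_integral_measure_pmf nn_integral_count_space_nat)
  ultimately show ?thesis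
    by (simp add: t_Suc)
qed

lemma expectation_poisson_size_bias_le:
  fixes S :: "nat \<times> nat \<Rightarrow> real" and h :: "nat \<Rightarrow> nat \<Rightarrow> real"
  assumes "0 < \<mu>"
    and S: "\<And>a b. 0 \<le> S (a, b)" "\<And>a b. S (a, b) \<le> real b * h a b"
    and h: "\<And>a b. 0 \<le> h a b" "\<And>a b. h a b \<le> 1" "\<And>a b. h a (Suc b) \<le> h a b"
  shows "measure_pmf.expectation (pair_pmf P (poisson_pmf \<mu>)) S
       \<le> \<mu> * measure_pmf.expectation (pair_pmf P (poisson_pmf \<mu>)) (\<lambda>(a, b). h a b)"
proof -
  let ?Q = "poisson_pmf \<mu>"
  let ?H = "\<integral>\<^sup>+z. ennreal (case z of (a, b) \<Rightarrow> h a b) \<partial>pair_pmf P ?Q"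
  have H_finite: "?H < \<top>"
  proof -
    have "?H \<le> (\<integral>\<^sup>+z. 1 \<partial>pair_pmf P ?Q)"
      using h by (intro nn_integral_mono) (auto split: prod.splits)
    then show ?thesis
      by (simp add: le_less_trans measure_pmf.emeasure_space_1)
  qed
  have "(\<integral>\<^sup>+z. ennreal (S z) \<partial>pair_pmf P ?Q)
      \<le> (\<integral>\<^sup>+a. \<integral>\<^sup>+b. ennreal (real b * h a b) \<partial>?Q \<partial>P)"
    using S(2) by (auto simp: nn_integral_pair_pmf' intro!: nn_integral_mono ennreal_leI)
  also have "\<dots> = (\<integral>\<^sup>+a. ennreal \<mu> * \<integral>\<^sup>+b. ennreal (h a (Suc b)) \<partial>?Q \<partial>P)"
    using assms(1) h(1) by (intro nn_integral_cong nn_integral_poisson_size_bias) auto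
  also have "\<dots> \<le> (\<integral>\<^sup>+a. ennreal \<mu> * \<integral>\<^sup>+b. ennreal (h a b) \<partial>?Q \<partial>P)"
    using h(3) by (intro nn_integral_mono mult_left_mono ennreal_leI) auto
  also have "\<dots> = ennreal \<mu> * ?H"
    by (simp add: nn_integral_cmult nn_integral_pair_pmf')
  finally have "(\<integral>\<^sup>+z. ennreal (S z) \<partial>pair_pmf P ?Q) \<le> ennreal \<mu> * ?H" .
  then have "enn2real (\<integral>\<^sup>+z. ennreal (S z) \<partial>pair_pmf P ?Q) \<le> enn2real (ennreal \<mu> * ?H)"
    using H_finite by (intro enn2real_mono) (auto simp: ennreal_mult_less_top)
  moreover have "measure_pmf.expectation (pair_pmf P ?Q) S = enn2real (\<integral>\<^sup>+z. ennreal (S z) \<partial>pair_pmf P ?Q)"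
    using S(1) by (intro integral_eq_nn_integral) (auto split: prod.splits)
  moreover have "measure_pmf.expectation (pair_pmf P ?Q) (\<lambda>(a, b). h a b) = enn2real ?H"
    using h(1) by (intro integral_eq_nn_integral) (auto split: prod.splits)
  ultimately show ?thesis
    using assms(1) by (simp add: enn2real_mult)
qed

context score_densities
begin

definition detected_fraction :: "nat \<Rightarrow> nat \<Rightarrow> nat \<Rightarrow> real" where
  "detected_fraction n a b = (if b = 0 then 1 else enn2real (expected_detected n a b) / real b)"

lemma enn2real_expected_detected_le: "enn2real (expected_detected n a b) \<le> real b"
proof -
  have "enn2real (expected_detected n a b) \<le> enn2real (of_nat b)"
    using expected_detected_le by (intro enn2real_mono) (auto simp: of_nat_less_top)
  then show ?thesis
    by simp
qed

lemma detected_fraction_nonneg: "0 \<le> detected_fraction n a b"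
  by (simp add: detected_fraction_def)

lemma detected_fraction_le_1: "detected_fraction n a b \<le> 1"
  using enn2real_expected_detected_le[of n a b] by (simp add: detected_fraction_def field_simps)

lemma detected_fraction_Suc_le: "detected_fraction n a (Suc b) \<le> detected_fraction n a b"
proof (cases "b = 0")
  case True
  then show ?thesis
    using detected_fraction_le_1[of n a "Suc 0"] by (simp add: detected_fraction_def)
next
  case False
  have "enn2real (of_nat b * expected_detected n a (Suc b)) \<le> enn2real (of_nat (Suc b) * expected_detected n a b)"
    using expected_detected_Suc_le expected_detected_finite
    by (intro enn2real_mono) (auto simp: ennreal_mult_less_top of_nat_less_top)
  then have "real b * enn2real (expected_detected n a (Suc b)) \<le> real (Suc b) * enn2real (expected_detected n a b)"
    by (simp add: enn2real_mult del: of_nat_Suc)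
  then show ?thesis
    using False by (simp add: detected_fraction_def field_simps)
qed

lemma integral_bp_ratio:
  "integral\<^sup>L (score_space f0 f1 a b) (\<lambda>(s0, s1). bp_ratio n a b s0 s1) = detected_fraction n a b"
proof -
  interpret pair_prob_space "P0 a" "P1 b"
    by (rule pair_prob_space_scores)
  show ?thesis
  proof (cases "b = 0")
    case True
    then have "(\<lambda>(s0, s1). bp_ratio n a b s0 s1) = (\<lambda>_. 1)"
      by (auto simp: bp_ratio_def)
    then show ?thesis
      using True P.prob_space by (simp add: score_space_eq detected_fraction_def)
  next
    case False
    then have "(\<lambda>(s0, s1). bp_ratio n a b s0 s1) = (\<lambda>z. real (bp_detected n a b (fst z) (snd z)) / real b)"
      by (auto simp: bp_ratio_def)
    moreover have "integral\<^sup>L (P0 a \<Otimes>\<^sub>M P1 b) (\<lambda>z. real (bp_detected n a b (fst z) (snd z)))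
        = enn2real (expected_detected n a b)"
      unfolding expected_detected_def by (intro integral_eq_nn_integral) auto
    ultimately show ?thesis
      using False by (simp add: score_space_eq detected_fraction_def)
  qed
qed

lemma sum_F_W_le_detected_fraction:
  "(\<Sum>j=1..min n b. F_W F0 f0 F1 f1 n a b j 0) \<le> real b * detected_fraction n a b"
  using sum_F_W_le_expected_detected[where n=n and a=a and b=b]
  by (cases "b = 0") (simp_all add: detected_fraction_def)

lemma F_W_nonneg: "1 \<le> j \<Longrightarrow> j \<le> b \<Longrightarrow> 0 \<le> F_W F0 f0 F1 f1 n a b j 0"
  by (simp add: F_W_eq_nn_integral)

end

theorem theorem6:
  fixes lam f0 f1 F0 F1 :: "real \<Rightarrow> real" and \<tau> \<beta> k :: real
  assumes tau_pos: "0 < \<tau>"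
    and lam_cont: "continuous_on {0..\<tau>} lam"
    and lam_nonneg: "\<And>t. t \<in> {0..\<tau>} \<Longrightarrow> 0 \<le> lam t"
    and Lam_pos: "0 < integral {0..\<tau>} lam"
    and beta: "0 < \<beta>" "\<beta> < 1/2"
    and f0_meas: "f0 \<in> borel_measurable borel" and f1_meas: "f1 \<in> borel_measurable borel"
    and f0_nonneg: "\<And>x. 0 \<le> f0 x" and f1_nonneg: "\<And>x. 0 \<le> f1 x"
    and f0_supp: "\<And>x. x \<notin> {0..1} \<Longrightarrow> f0 x = 0"
    and f1_supp: "\<And>x. x \<notin> {0..1} \<Longrightarrow> f1 x = 0"
    and f0_int: "integrable lborel f0" and f1_int: "integrable lborel f1"
    and f0_one: "integral\<^sup>L lborel f0 = 1" and f1_one: "integral\<^sup>L lborel f1 = 1"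
    and F0_def: "\<And>x. F0 x = set_lebesgue_integral lborel {..x} f0"
    and F1_def: "\<And>x. F1 x = set_lebesgue_integral lborel {..x} f1"
    and k: "0 \<le> k" "k \<le> 1"
  shows "(let Lam = integral {0..\<tau>} lam; nk = nat \<lfloor>k * Lam\<rfloor> in
          Psi_BP f0 f1 \<beta> Lam nk \<ge>
            1 / (\<beta> * Lam) *
            measure_pmf.expectation (pair_pmf (poisson_pmf ((1 - \<beta>) * Lam)) (poisson_pmf (\<beta> * Lam)))
              (\<lambda>(a, b). \<Sum>j = 1..min nk b. F_W F0 f0 F1 f1 nk a b j 0))"
proof -
  \<comment> \<open>The bound holds for every number of inspections: of the hypotheses on the arrival process
    only \<open>\<beta> \<Lambda>(\<tau>) > 0\<close> is used.\<close>
  interpret score_densities f0 F0 f1 F1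
    by unfold_locales (use assms in auto)
  define Lam where "Lam = integral {0..\<tau>} lam"
  define nk where "nk = nat \<lfloor>k * Lam\<rfloor>"
  define PQ where "PQ = pair_pmf (poisson_pmf ((1 - \<beta>) * Lam)) (poisson_pmf (\<beta> * Lam))"
  have \<mu>: "0 < \<beta> * Lam"
    using beta Lam_pos by (simp add: Lam_def)
  have "Psi_BP f0 f1 \<beta> Lam nk = measure_pmf.expectation PQ (\<lambda>(a, b). detected_fraction nk a b)"
    unfolding Psi_BP_def PQ_def by (simp add: integral_bp_ratio case_prod_beta)
  moreover have "measure_pmf.expectation PQ (\<lambda>(a, b). \<Sum>j = 1..min nk b. F_W F0 f0 F1 f1 nk a b j 0)
      \<le> \<beta> * Lam * measure_pmf.expectation PQ (\<lambda>(a, b). detected_fraction nk a b)"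
    unfolding PQ_def
    using sum_F_W_le_detected_fraction
    by (intro expectation_poisson_size_bias_le)
       (auto intro!: sum_nonneg F_W_nonneg detected_fraction_nonneg detected_fraction_le_1
         detected_fraction_Suc_le simp: \<mu>)
  ultimately have "1 / (\<beta> * Lam) * measure_pmf.expectation PQ
      (\<lambda>(a, b). \<Sum>j = 1..min nk b. F_W F0 f0 F1 f1 nk a b j 0) \<le> Psi_BP f0 f1 \<beta> Lam nk"
    using \<mu> by (simp add: field_simps)
  then show ?thesis
    unfolding Let_def Lam_def[symmetric] nk_def[symmetric] PQ_def[symmetric] .
qed

end
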